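(* Let $q$ be an odd prime power, $d$ a positive integer, and $\varphi_d$ the coloring defined below. Let $A,B \subseteq (\mathbb{F}_q^* )^d$ be disjoint sets of vectors and $\alpha \in C_d$ a color such that $\varphi_d(a,b) = \alpha$ for all $a \in A$ and $b\in B$. Then $A$ confines $B$ or $B$ confines $A$ (or both).
   Context: $\mathbb{F}_q^*$ is the set of nonzero elements of $\mathbb{F}_q$, endowed with an arbitrary fixed linear order; $(\mathbb{F}_q^* )^d$ is ordered lexicographically with respect to it. Let $C_d = \mathrm{DOT} \sqcup \mathrm{ZERO}\sqcup\mathrm{UP}\sqcup\mathrm{DOWN}$, where $\mathrm{DOT} = \mathbb{F}_q^*$ and ZERO, UP, DOWN are three disjoint copies of $\{1,\dots,d\}\times \mathbb{F}_q$. For distinct $x<y$ in $(\mathbb{F}_q^* )^d$, let $i$ be the first coordinate where $x$ and $y$ differ, and $x\cdot y$ the standard dot product; $\varphi_d(x,y)=\varphi_d(y,x)$ is $(i,x_i+y_i)$ in ZERO if $x\cdot y=0$; $(i,x_i+y_i)$ in UP if $x\cdot y\ne 0$ and $x\cdot y=x\cdot x$; $(i,x_i+y_i)$ in DOWN if $x\cdot y\notin\{0,x\cdot x\}$ and $x\cdot y=y\cdot y$; and $x\cdot y\in\mathrm{DOT}$ otherwise. $A$ confines $B$ means: for each $a \in A$, $a\cdot x = a\cdot y$ for all $x,y \in B$. *)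

theory Defs
  imports Main "HOL-Library.Cardinality"
begin

text \<open>Colours: DOT is F_q^*, ZERO/UP/DOWN are copies of {1..d} x F_q
  (indices are stored 1-based as naturals).\<close>
datatype 'a colour = Dot 'a | Zero nat 'a | Up nat 'a | Down nat 'a

definition nzvecs :: "nat \<Rightarrow> 'a::zero list set" where
  "nzvecs d = {x. length x = d \<and> (\<forall>i<d. x ! i \<noteq> 0)}"

definition dotp :: "'a::comm_semiring_0 list \<Rightarrow> 'a list \<Rightarrow> 'a" where
  "dotp x y = (\<Sum>i<length x. x ! i * y ! i)"

text \<open>First (0-based) coordinate where x and y differ.\<close>
definition first_diff :: "'a list \<Rightarrow> 'a list \<Rightarrow> nat" where
  "first_diff x y = (LEAST i. x ! i \<noteq> y ! i)"

definition lexless :: "('a \<times> 'a) set \<Rightarrow> 'a list \<Rightarrow> 'a list \<Rightarrow> bool" where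
  "lexless r x y = (x \<noteq> y \<and> (x ! first_diff x y, y ! first_diff x y) \<in> r)"

text \<open>Colour of the pair with x < y.\<close>
definition phi_ord :: "'a::field list \<Rightarrow> 'a list \<Rightarrow> 'a colour" where
  "phi_ord x y =
    (let i = first_diff x y; s = x ! i + y ! i; p = dotp x y in
     if p = 0 then Zero (Suc i) s
     else if p = dotp x x then Up (Suc i) s
     else if p = dotp y y then Down (Suc i) s
     else Dot p)"

definition phi :: "('a \<times> 'a) set \<Rightarrow> 'a::field list \<Rightarrow> 'a list \<Rightarrow> 'a colour" where
  "phi r x y = (if lexless r x y then phi_ord x y else phi_ord y x)"

definition confines :: "'a::comm_semiring_0 list set \<Rightarrow> 'a list set \<Rightarrow> bool" where
  "confines A B = (\<forall>a\<in>A. \<forall>x\<in>B. \<forall>y\<in>B. dotp a x = dotp a y)"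

end

theory Submission
  imports Defs
begin

text \<open>A colour from DOT or ZERO fixes the dot product \<open>a \<cdot> b\<close> outright, so \<open>A\<close> confines \<open>B\<close>.
  A colour \<open>(i, s)\<close> from UP or DOWN fixes the first differing coordinate \<open>i\<close> and the sum
  \<open>a\<^sub>i + b\<^sub>i = s\<close>; with one partner held fixed this forces all \<open>a\<^sub>i\<close> to coincide and all \<open>b\<^sub>i\<close>
  to coincide, so every pair is ordered the same way. Then \<open>a \<cdot> b\<close> equals \<open>a \<cdot> a\<close> for all
  pairs, or \<open>b \<cdot> b\<close> for all pairs, and one side confines the other.\<close>

lemma dotp_commute: "length x = length y \<Longrightarrow> dotp x y = dotp y (x::'a::comm_semiring_0 list)"
  unfolding dotp_def by (simp add: mult.commute)

lemma first_diff_commute: "first_diff x y = first_diff y x"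
  unfolding first_diff_def by metis

lemma phi_ord_Dot: "phi_ord x y = Dot c \<Longrightarrow> dotp x y = c"
  and phi_ord_Zero: "phi_ord x y = Zero i s \<Longrightarrow> dotp x y = 0"
  and phi_ord_Up: "phi_ord x y = Up i s \<Longrightarrow>
    dotp x y = dotp x x \<and> i = Suc (first_diff x y) \<and> s = x ! first_diff x y + y ! first_diff x y"
  and phi_ord_Down: "phi_ord x y = Down i s \<Longrightarrow>
    dotp x y = dotp y y \<and> i = Suc (first_diff x y) \<and> s = x ! first_diff x y + y ! first_diff x y"
  unfolding phi_ord_def Let_def by (auto split: if_splits)

lemma phi_Dot: "phi r a b = Dot c \<Longrightarrow> length a = length b \<Longrightarrow> dotp a b = c"
  unfolding phi_def by (metis dotp_commute phi_ord_Dot)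

lemma phi_Zero: "phi r a b = Zero i s \<Longrightarrow> length a = length b \<Longrightarrow> dotp a b = 0"
  unfolding phi_def by (metis dotp_commute phi_ord_Zero)

lemma phi_Up:
  assumes "phi r a b = Up i s" and "length a = length b"
  shows "first_diff a b = i - 1" and "a ! (i - 1) + b ! (i - 1) = s"
    and "dotp a b = (if lexless r a b then dotp a a else dotp b b)"
  using assms unfolding phi_def
  by (cases "lexless r a b"; auto dest!: phi_ord_Up simp: dotp_commute first_diff_commute add.commute)+

lemma phi_Down:
  assumes "phi r a b = Down i s" and "length a = length b"
  shows "first_diff a b = i - 1" and "a ! (i - 1) + b ! (i - 1) = s"
    and "dotp a b = (if lexless r a b then dotp b b else dotp a a)"
  using assms unfolding phi_def
  by (cases "lexless r a b"; auto dest!: phi_ord_Down simp: dotp_commute first_diff_commute add.commute)+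

lemma lexless_constant_if_first_diff_and_sum_constant:
  assumes "A \<inter> B = {}"
    and "\<forall>a\<in>A. \<forall>b\<in>B. first_diff a b = k \<and> a ! k + b ! k = (s::'a::cancel_semigroup_add)"
  obtains less where "\<forall>a\<in>A. \<forall>b\<in>B. lexless r a b = less"
proof (cases "A = {} \<or> B = {}")
  case False
  then obtain a0 b0 where a0: "a0 \<in> A" and b0: "b0 \<in> B" by blast
  have "lexless r a b = lexless r a0 b0" if "a \<in> A" "b \<in> B" for a b
  proof -
    have "a ! k + b0 ! k = a0 ! k + b0 ! k" and "a0 ! k + b ! k = a0 ! k + b0 ! k"
      using assms(2) that a0 b0 by auto
    then have "a ! k = a0 ! k" and "b ! k = b0 ! k" by simp_all
    moreover have "a \<noteq> b" and "a0 \<noteq> b0"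
      using assms(1) that a0 b0 by auto
    ultimately show ?thesis
      using assms(2) that a0 b0 unfolding lexless_def by auto
  qed
  then show ?thesis using that by blast
qed (use that in blast)

lemma confinesI: "(\<And>a b. a \<in> A \<Longrightarrow> b \<in> B \<Longrightarrow> dotp a b = f a) \<Longrightarrow> confines A B"
  unfolding confines_def by simp

lemma confines_if_dotp_right_diagonal:
  assumes "\<forall>a\<in>A. \<forall>b\<in>B. length a = length b" and "\<forall>a\<in>A. \<forall>b\<in>B. dotp a b = dotp b b"
  shows "confines B A"
  using assms unfolding confines_def by (metis dotp_commute)

lemma confines_if_Up_or_Down:
  assumes "A \<inter> B = {}"
    and len: "\<forall>a\<in>A. \<forall>b\<in>B. length a = length b"
    and mono: "\<forall>a\<in>A. \<forall>b\<in>B. phi r a b = \<alpha>"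
    and \<alpha>: "\<alpha> = Up i s \<or> \<alpha> = Down i s"
  shows "confines A B \<or> confines B A"
proof -
  have "\<forall>a\<in>A. \<forall>b\<in>B. first_diff a b = i - 1 \<and> a ! (i - 1) + b ! (i - 1) = s"
    using \<alpha> len mono phi_Up(1,2) phi_Down(1,2) by metis
  then obtain less where less: "\<forall>a\<in>A. \<forall>b\<in>B. lexless r a b = less"
    using lexless_constant_if_first_diff_and_sum_constant[OF assms(1)] by metis
  \<comment> \<open>UP pairs \<open>a \<cdot> b\<close> with the square of the smaller vector, DOWN with that of the larger.\<close>
  have dotp_ab: "dotp a b = (if less = (\<alpha> = Up i s) then dotp a a else dotp b b)"
    if "a \<in> A" "b \<in> B" for a b
  proof -
    have "phi r a b = \<alpha>" "length a = length b" "lexless r a b = less"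
      using less len mono that by auto
    then show ?thesis
      using \<alpha> phi_Up(3)[of r a b i s] phi_Down(3)[of r a b i s] by auto
  qed
  show ?thesis
  proof (cases "less = (\<alpha> = Up i s)")
    case True
    then have "confines A B" using dotp_ab by (intro confinesI[where f = "\<lambda>a. dotp a a"]) simp
    then show ?thesis ..
  next
    case False
    then have "confines B A" using dotp_ab len by (simp add: confines_if_dotp_right_diagonal)
    then show ?thesis ..
  qed
qed

theorem lemma3p8:
  fixes r :: "('a::{finite,field} \<times> 'a) set"
    and d :: nat
    and A B :: "'a list set"
    and \<alpha> :: "'a colour"
  assumes "odd CARD('a)"
    and "strict_linear_order_on (UNIV - {0}) r"
    and "d > 0"
    and "A \<subseteq> nzvecs d" and "B \<subseteq> nzvecs d"
    and "A \<inter> B = {}"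
    and "\<forall>a\<in>A. \<forall>b\<in>B. phi r a b = \<alpha>"
  shows "confines A B \<or> confines B A"
proof -
  have len: "\<forall>a\<in>A. \<forall>b\<in>B. length a = length b"
    using assms(4,5) unfolding nzvecs_def by auto
  show ?thesis
  proof (cases \<alpha>)
    case (Dot c)
    then have "confines A B"
      using assms(7) len by (intro confinesI[where f = "\<lambda>_. c"]) (auto intro: phi_Dot[of r])
    then show ?thesis ..
  next
    case (Zero i s)
    then have "confines A B"
      using assms(7) len by (intro confinesI[where f = "\<lambda>_. 0"]) (auto intro: phi_Zero[of r])
    then show ?thesis ..
  next
    case (Up i s)
    then show ?thesis using confines_if_Up_or_Down[OF assms(6) len assms(7)] by blast
  next
    case (Down i s)
    then show ?thesis using confines_if_Up_or_Down[OF assms(6) len assms(7)] by blast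
  qed
qed

end
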